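(* Let $\underline{Q}$ be a lower transition rate operator. Then for any $t>0$, any $x\in\mathcal{X}$ and any $A\subseteq\mathcal{X}$: \begin{equation*} \underline{T}_t\mathbb{I}_{A}(x)>0 ~~\Leftrightarrow~~ A\text{ is lower reachable from }x. \end{equation*}
   Context: $\mathcal{X}$ is a finite state space and $\mathcal{L}(\mathcal{X})$ is the set of real-valued functions on $\mathcal{X}$; $\mathbb{I}_S$ denotes the indicator of $S\subseteq\mathcal{X}$ (and $\mathbb{I}_x\coloneqq\mathbb{I}_{\{x\}}$), and $\mathbb{N}_0\coloneqq\mathbb{N}\cup\{0\}$. A lower transition rate operator is a map $\underline{Q}\colon\mathcal{L}(\mathcal{X})\to\mathcal{L}(\mathcal{X})$ such that for all $f,g\in\mathcal{L}(\mathcal{X})$, $\lambda\geq0$, $\mu\in\mathbb{R}$ and $x,y\in\mathcal{X}$: $\underline{Q}(\mu)=0$; $\underline{Q}(f+g)\geq\underline{Q}(f)+\underline{Q}(g)$; $\underline{Q}(\lambda f)=\lambda\underline{Q}(f)$; and $x\neq y\Rightarrow\underline{Q}(\mathbb{I}_y)(x)\geq0$. For each $t\geq0$, $\underline{T}_t$ is defined for every $f$ by the (uniquely solvable) differential equation $\frac{d}{dt}\underline{T}_tf=\underline{Q}\,\underline{T}_tf$ for all $t\geq0$ with $\underline{T}_0f=f$. Lower reachability: $A$ is lower reachable from $x$ if $x\in A_n$, where $A_0\coloneqq A$, $A_{k+1}\coloneqq A_k\cup\{y\in\mathcal{X}\setminus A_k\colon\underline{Q}(\mathbb{I}_{A_k})(y)>0\}$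 for $k\in\mathbb{N}_0$, and $n$ is the first index with $A_n=A_{n+1}$. *)

theory Defs
  imports "HOL-Analysis.Analysis"
begin

definition ind :: "'x::finite set \<Rightarrow> real^'x" where
  "ind A = (\<chi> y. if y \<in> A then 1 else 0)"

definition lower_rate_op :: "(real^'x::finite \<Rightarrow> real^'x) \<Rightarrow> bool" where
  "lower_rate_op Q \<longleftrightarrow>
     (\<forall>\<mu>::real. Q (\<chi> y. \<mu>) = 0) \<and>
     (\<forall>f g x. Q (f + g) $ x \<ge> Q f $ x + Q g $ x) \<and>
     (\<forall>f c::real. c \<ge> 0 \<longrightarrow> Q (c *\<^sub>R f) = c *\<^sub>R Q f) \<and>
     (\<forall>x y. x \<noteq> y \<longrightarrow> Q (ind {y}) $ x \<ge> 0)"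

definition is_lower_semigroup ::
  "(real^'x::finite \<Rightarrow> real^'x) \<Rightarrow> (real \<Rightarrow> real^'x \<Rightarrow> real^'x) \<Rightarrow> bool" where
  "is_lower_semigroup Q T \<longleftrightarrow>
     (\<forall>f. T 0 f = f \<and>
        (\<forall>t\<ge>0. ((\<lambda>s. T s f) has_vector_derivative Q (T t f)) (at t within {0..})))"

fun reach_seq :: "(real^'x::finite \<Rightarrow> real^'x) \<Rightarrow> 'x set \<Rightarrow> nat \<Rightarrow> 'x set" where
  "reach_seq Q A 0 = A"
| "reach_seq Q A (Suc k) = reach_seq Q A k \<union>
     {y. y \<notin> reach_seq Q A k \<and> Q (ind (reach_seq Q A k)) $ y > 0}"

definition lower_reachable :: "(real^'x::finite \<Rightarrow> real^'x) \<Rightarrow> 'x \<Rightarrow> 'x set \<Rightarrow> bool" where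
  "lower_reachable Q x A \<longleftrightarrow>
     x \<in> reach_seq Q A (LEAST n. reach_seq Q A n = reach_seq Q A (Suc n))"

end

theory Submission
  imports Defs
begin

text \<open>
  Write \<open>u\<^sub>s = T\<^sub>s I\<^sub>A\<close>, so that \<open>u' = Q u\<close> coordinatewise. A lower transition rate
  operator is superadditive, positively homogeneous, nonnegative at a zero of a nonnegative
  function, and satisfies \<open>|Q h (y)| \<le> K \<Sum>\<^sub>z |h z|\<close> for a constant \<open>K\<close>. A Gronwall argument for the sum of the
  squared positive parts of finitely many functions shows that the flow preserves \<open>0 \<le> u \<le> 1\<close>
  and, for every set \<open>B \<supseteq> A\<close> with \<open>Q I\<^sub>B \<le> 0\<close> off \<open>B\<close>, the vanishing of \<open>u\<close> off \<open>B\<close>;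
  the limit of the reachability sequence is such a set. Conversely \<open>exp (K s) u\<^sub>s(y)\<close> is
  nondecreasing, and strictly increasing once \<open>Q I\<^sub>C (y) > 0\<close> for a set \<open>C\<close> on which \<open>u\<close>
  is already positive, so positivity spreads along the reachability sequence.
\<close>

section \<open>Differential inequalities\<close>

lemma nondecreasing_if_derivative_nonneg:
  fixes f :: "real \<Rightarrow> real"
  assumes "a \<le> b"
    and der: "\<And>s. s \<in> {a..b} \<Longrightarrow> (f has_real_derivative f' s) (at s within {a..b})"
    and nonneg: "\<And>s. a < s \<Longrightarrow> s < b \<Longrightarrow> 0 \<le> f' s"
  shows "f a \<le> f b"
proof (rule DERIV_nonneg_imp_increasing_open[OF \<open>a \<le> b\<close>])
  show "\<exists>y. DERIV f s :> y \<and> 0 \<le> y" if "a < s" "s < b" for s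
    using der[of s] nonneg[OF that] that by (auto simp: at_within_Icc_at)
qed (rule DERIV_continuous_on[OF der])

lemma increasing_if_derivative_pos:
  fixes f :: "real \<Rightarrow> real"
  assumes "a < b"
    and der: "\<And>s. s \<in> {a..b} \<Longrightarrow> (f has_real_derivative f' s) (at s within {a..b})"
    and pos: "\<And>s. a < s \<Longrightarrow> s < b \<Longrightarrow> 0 < f' s"
  shows "f a < f b"
proof (rule DERIV_pos_imp_increasing_open[OF \<open>a < b\<close>])
  show "\<exists>y. DERIV f s :> y \<and> 0 < y" if "a < s" "s < b" for s
    using der[of s] pos[OF that] that by (auto simp: at_within_Icc_at)
qed (rule DERIV_continuous_on[OF der])

lemma gronwall_nonpos:
  fixes f :: "real \<Rightarrow> real"
  assumes "a \<le> b"
    and der: "\<And>s. s \<in> {a..b} \<Longrightarrow> (f has_real_derivative f' s) (at s within {a..b})"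
    and bound: "\<And>s. s \<in> {a..b} \<Longrightarrow> f' s \<le> C * f s"
    and "f a \<le> 0"
  shows "f b \<le> 0"
proof -
  define g where "g s = exp (- C * s) * f s" for s
  have "((\<lambda>s. - g s) has_real_derivative exp (- C * s) * (C * f s - f' s)) (at s within {a..b})"
    if "s \<in> {a..b}" for s
    unfolding g_def
    by (rule derivative_eq_intros refl der[OF that] | simp)+ (simp add: algebra_simps)
  then have "- g a \<le> - g b"
    by (rule nondecreasing_if_derivative_nonneg[OF \<open>a \<le> b\<close>]) (use bound in auto)
  then have "exp (- C * b) * f b \<le> exp (- C * a) * f a"
    by (simp add: g_def)
  also have "\<dots> \<le> 0"
    using \<open>f a \<le> 0\<close> by (simp add: mult_nonneg_nonpos)
  finally show ?thesis by (simp add: mult_le_0_iff)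
qed

lemma has_real_derivative_pos_part_squared:
  "((\<lambda>x::real. (max x 0)\<^sup>2) has_real_derivative 2 * max x 0) (at x)"
proof (cases "x = 0")
  case True
  have "\<forall>\<^sub>F y in at x. max y 0 = ((max y 0)\<^sup>2 - (max x 0)\<^sup>2) / (y - x)"
    unfolding eventually_at_filter using True by (auto simp: power2_eq_square max_def)
  moreover have "((\<lambda>y. max y 0) \<longlongrightarrow> max x 0) (at x)"
    by (intro tendsto_intros)
  ultimately have "((\<lambda>y. ((max y 0)\<^sup>2 - (max x 0)\<^sup>2) / (y - x)) \<longlongrightarrow> 2 * max x 0) (at x)"
    using True Lim_transform_eventually by fastforce
  then show ?thesis by (simp add: has_field_derivative_iff)
next
  case False
  then consider "0 < x" | "x < 0" by linarith
  then show ?thesis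
  proof cases
    case 1
    have "((\<lambda>x. x\<^sup>2) has_real_derivative 2 * max x 0) (at x)"
      using 1 by (auto intro!: derivative_eq_intros)
    then show ?thesis
      by (rule has_field_derivative_transform_within_open[where S="{0<..}"]) (use 1 in auto)
  next
    case 2
    have "((\<lambda>x. 0) has_real_derivative 2 * max x 0) (at x)"
      using 2 by simp
    then show ?thesis
      by (rule has_field_derivative_transform_within_open[where S="{..<0}"]) (use 2 in auto)
  qed
qed

lemma nonpos_preserved_by_derivative_bound:
  fixes u d :: "'i \<Rightarrow> real \<Rightarrow> real"
  assumes "finite S" "0 \<le> K" "a \<le> b"
    and der: "\<And>i s. i \<in> S \<Longrightarrow> s \<in> {a..b} \<Longrightarrow> (u i has_real_derivative d i s) (at s within {a..b})"
    and bound: "\<And>i s. i \<in> S \<Longrightarrow> s \<in> {a..b} \<Longrightarrow> 0 < u i s \<Longrightarrow> d i s \<le> K * (\<Sum>j\<in>S. max (u j s) 0)"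
    and init: "\<And>i. i \<in> S \<Longrightarrow> u i a \<le> 0"
    and "i \<in> S"
  shows "u i b \<le> 0"
proof -
  \<comment> \<open>By Cauchy-Schwarz, \<open>\<phi>' \<le> 2 K |S| \<phi>\<close>; Gronwall then keeps \<open>\<phi>\<close> at \<open>0\<close>.\<close>
  define \<phi> where "\<phi> s = (\<Sum>j\<in>S. (max (u j s) 0)\<^sup>2)" for s
  define \<phi>' where "\<phi>' s = (\<Sum>j\<in>S. 2 * max (u j s) 0 * d j s)" for s
  have der_\<phi>: "(\<phi> has_real_derivative \<phi>' s) (at s within {a..b})" if "s \<in> {a..b}" for s
    unfolding \<phi>_def \<phi>'_def
    by (rule DERIV_sum, rule DERIV_chain2[OF has_real_derivative_pos_part_squared der])
      (use that in auto)
  have bound_\<phi>: "\<phi>' s \<le> (2 * K * card S) * \<phi> s" if "s \<in> {a..b}" for s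
  proof -
    have "\<phi>' s \<le> (\<Sum>j\<in>S. 2 * max (u j s) 0 * (K * (\<Sum>i\<in>S. max (u i s) 0)))"
      unfolding \<phi>'_def
      by (rule sum_mono) (use bound that in \<open>auto simp: max_def\<close>)
    also have "\<dots> = 2 * K * (\<Sum>i\<in>S. max (u i s) 0)\<^sup>2"
      by (simp add: sum_distrib_left[symmetric] sum_distrib_right[symmetric] power2_eq_square mult.assoc)
    also have "\<dots> \<le> 2 * K * ((\<Sum>i\<in>S. (max (u i s) 0)\<^sup>2) * card S)"
      by (rule mult_left_mono[OF sum_squared_le_sum_of_squares]) (use \<open>0 \<le> K\<close> in auto)
    finally show ?thesis by (simp add: \<phi>_def algebra_simps)
  qed
  have "\<phi> a \<le> 0"
    unfolding \<phi>_def using init by (intro sum_nonpos) (simp add: max_def)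
  with gronwall_nonpos[OF \<open>a \<le> b\<close>, of \<phi> \<phi>'] have "\<phi> b \<le> 0"
    using der_\<phi> bound_\<phi> by blast
  moreover have "(max (u i b) 0)\<^sup>2 \<le> \<phi> b"
    unfolding \<phi>_def by (rule member_le_sum) (use \<open>i \<in> S\<close> \<open>finite S\<close> in auto)
  ultimately have "(max (u i b) 0)\<^sup>2 \<le> 0"
    by linarith
  then show ?thesis
    by (simp add: max_def split: if_splits)
qed

section \<open>Lower transition rate operators\<close>

lemma ind_nth [simp]: "ind A $ z = (if z \<in> A then 1 else 0)"
  by (simp add: ind_def)

lemma sum_scaleR_ind:
  "(\<Sum>z\<in>S. (v $ z) *\<^sub>R ind {z}) = (\<chi> w. if w \<in> S then v $ w else 0)"
proof -
  have "(\<Sum>z\<in>S. (v $ z) *\<^sub>R ind {z}) $ w = (\<Sum>z\<in>S. v $ z * (if w = z then 1 else 0))" for w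
    by simp
  also have "\<dots> w = (\<Sum>z\<in>S. if w = z then v $ w else 0)" for w
    by (rule sum.cong) auto
  finally show ?thesis
    by (simp add: vec_eq_iff sum.delta[OF finite])
qed

definition rate_bound :: "(real^'x::finite \<Rightarrow> real^'x) \<Rightarrow> real" where
  "rate_bound Q = (\<Sum>z\<in>UNIV. norm (Q (ind {z})) + norm (Q (- ind {z})))"

lemma rate_bound_nonneg: "0 \<le> rate_bound Q"
  by (simp add: rate_bound_def sum_nonneg)

context
  fixes Q :: "real^'x::finite \<Rightarrow> real^'x"
  assumes Q: "lower_rate_op Q"
begin

lemma lower_rate_op_const: "Q (\<chi> y. \<mu>) = 0"
  using Q unfolding lower_rate_op_def by blast

lemma lower_rate_op_zero: "Q 0 = 0"
  using lower_rate_op_const[of 0] by (simp add: zero_vec_def)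

lemma lower_rate_op_superadditive: "Q f $ y + Q g $ y \<le> Q (f + g) $ y"
  using Q unfolding lower_rate_op_def by blast

lemma lower_rate_op_scaleR: "0 \<le> c \<Longrightarrow> Q (c *\<^sub>R f) = c *\<^sub>R Q f"
  using Q unfolding lower_rate_op_def by blast

lemma lower_rate_op_ind_nonneg: "x \<noteq> y \<Longrightarrow> 0 \<le> Q (ind {y}) $ x"
  using Q unfolding lower_rate_op_def by blast

lemma lower_rate_op_sum: "finite I \<Longrightarrow> (\<Sum>i\<in>I. Q (f i) $ y) \<le> Q (\<Sum>i\<in>I. f i) $ y"
proof (induction I rule: finite_induct)
  case (insert i I)
  then show ?case
    using lower_rate_op_superadditive[of "f i" y "\<Sum>i\<in>I. f i"] by simp
qed (simp add: lower_rate_op_zero)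

lemma lower_rate_op_add_const: "Q (f + (\<chi> y. \<mu>)) = Q f"
proof -
  have "Q f $ x \<le> Q (f + (\<chi> y. \<mu>)) $ x" for x
    using lower_rate_op_superadditive[of f x "\<chi> y. \<mu>"] by (simp add: lower_rate_op_const)
  moreover have "Q (f + (\<chi> y. \<mu>)) $ x \<le> Q f $ x" for x
  proof -
    have "f + (\<chi> y. \<mu>) + (\<chi> y. - \<mu>) = f"
      by (simp add: vec_eq_iff)
    then have "Q (f + (\<chi> y. \<mu>)) $ x + Q (\<chi> y. - \<mu>) $ x \<le> Q f $ x"
      using lower_rate_op_superadditive[of "f + (\<chi> y. \<mu>)" x "\<chi> y. - \<mu>"] by (simp only:)
    then show ?thesis
      by (simp add: lower_rate_op_const)
  qed
  ultimately show ?thesis by (simp add: vec_eq_iff order_antisym)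
qed

lemma lower_rate_op_nonneg_at_zero:
  assumes "\<And>z. 0 \<le> f $ z" and "f $ y = 0"
  shows "0 \<le> Q f $ y"
proof -
  have "0 \<le> (\<Sum>z\<in>-{y}. Q ((f $ z) *\<^sub>R ind {z}) $ y)"
    using assms(1) lower_rate_op_ind_nonneg by (intro sum_nonneg) (simp add: lower_rate_op_scaleR)
  also have "\<dots> \<le> Q (\<Sum>z\<in>-{y}. (f $ z) *\<^sub>R ind {z}) $ y"
    by (rule lower_rate_op_sum) simp
  also have "(\<Sum>z\<in>-{y}. (f $ z) *\<^sub>R ind {z}) = f"
    using \<open>f $ y = 0\<close> by (auto simp: sum_scaleR_ind vec_eq_iff)
  finally show ?thesis .
qed

lemma lower_rate_op_mono_at:
  assumes "\<And>z. f $ z \<le> g $ z" and "f $ y = g $ y"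
  shows "Q f $ y \<le> Q g $ y"
proof -
  have "0 \<le> Q (g - f) $ y"
    by (rule lower_rate_op_nonneg_at_zero) (use assms in auto)
  then show ?thesis
    using lower_rate_op_superadditive[of f y "g - f"] by simp
qed

lemma lower_rate_op_scaleR_ind_bound: "\<bar>Q (c *\<^sub>R ind {z}) $ y\<bar> \<le> \<bar>c\<bar> * rate_bound Q"
proof -
  have "\<bar>Q (ind {z}) $ y\<bar> + \<bar>Q (- ind {z}) $ y\<bar> \<le> norm (Q (ind {z})) + norm (Q (- ind {z}))"
    by (intro add_mono) (simp_all add: component_le_norm_cart)
  also have "\<dots> \<le> rate_bound Q"
    unfolding rate_bound_def by (rule member_le_sum) auto
  finally have bound: "\<bar>Q (ind {z}) $ y\<bar> + \<bar>Q (- ind {z}) $ y\<bar> \<le> rate_bound Q" .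
  have "c *\<^sub>R ind {z} = \<bar>c\<bar> *\<^sub>R (if 0 \<le> c then ind {z} else - ind {z})"
    by simp
  then have "Q (c *\<^sub>R ind {z}) = \<bar>c\<bar> *\<^sub>R Q (if 0 \<le> c then ind {z} else - ind {z})"
    by (simp only: lower_rate_op_scaleR abs_ge_zero)
  then show ?thesis
    using bound by (auto simp: abs_mult intro!: mult_left_mono)
qed

lemma lower_rate_op_lower_bound: "- (rate_bound Q * (\<Sum>z\<in>UNIV. \<bar>h $ z\<bar>)) \<le> Q h $ y"
proof -
  have "- (rate_bound Q * (\<Sum>z\<in>UNIV. \<bar>h $ z\<bar>)) = (\<Sum>z\<in>UNIV. - (\<bar>h $ z\<bar> * rate_bound Q))"
    by (simp add: sum_distrib_left sum_negf mult.commute)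
  also have "\<dots> \<le> (\<Sum>z\<in>UNIV. Q ((h $ z) *\<^sub>R ind {z}) $ y)"
  proof (rule sum_mono)
    show "- (\<bar>h $ z\<bar> * rate_bound Q) \<le> Q ((h $ z) *\<^sub>R ind {z}) $ y" for z
      using lower_rate_op_scaleR_ind_bound[of "h $ z" z y] by (simp add: abs_le_iff)
  qed
  also have "\<dots> \<le> Q (\<Sum>z\<in>UNIV. (h $ z) *\<^sub>R ind {z}) $ y"
    by (rule lower_rate_op_sum) simp
  also have "(\<Sum>z\<in>UNIV. (h $ z) *\<^sub>R ind {z}) = h"
    by (simp add: sum_scaleR_ind vec_nth_inverse)
  finally show ?thesis .
qed

lemma lower_rate_op_upper_bound: "Q h $ y \<le> rate_bound Q * (\<Sum>z\<in>UNIV. \<bar>h $ z\<bar>)"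
  using lower_rate_op_superadditive[of h y "- h"] lower_rate_op_lower_bound[of "- h" y]
  by (simp add: lower_rate_op_zero)

lemma lower_rate_op_le_pos_part:
  assumes "c < v $ y"
  shows "Q v $ y \<le> rate_bound Q * (\<Sum>z\<in>UNIV. max (v $ z - c) 0)"
proof -
  define w where "w = v + (\<chi> z. - c)"
  define p where "p = (\<chi> z. max (w $ z) 0)"
  define n where "n = (\<chi> z. max (- w $ z) 0)"
  have "v = w + (\<chi> z. c)"
    by (simp add: w_def vec_eq_iff)
  then have "Q v = Q w"
    by (simp add: lower_rate_op_add_const)
  have "w + n = p"
    by (simp add: p_def n_def vec_eq_iff max_def)
  then have "Q w $ y + Q n $ y \<le> Q p $ y"
    using lower_rate_op_superadditive[of w y n] by simp
  moreover have "0 \<le> Q n $ y"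
    by (rule lower_rate_op_nonneg_at_zero) (use assms in \<open>auto simp: n_def w_def\<close>)
  moreover have "Q p $ y \<le> rate_bound Q * (\<Sum>z\<in>UNIV. max (v $ z - c) 0)"
    using lower_rate_op_upper_bound[of p y] by (simp add: p_def w_def)
  ultimately show ?thesis
    using \<open>Q v = Q w\<close> by simp
qed

lemma lower_rate_op_ge_neg_part:
  assumes "v $ y < 0"
  shows "- (rate_bound Q * (\<Sum>z\<in>UNIV. max (- v $ z) 0)) \<le> Q v $ y"
proof -
  define p where "p = (\<chi> z. max (v $ z) 0)"
  define n where "n = (\<chi> z. max (- v $ z) 0)"
  have "p + - n = v"
    by (simp add: p_def n_def vec_eq_iff max_def)
  then have "Q p $ y + Q (- n) $ y \<le> Q v $ y"
    using lower_rate_op_superadditive[of p y "- n"] by simp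
  moreover have "0 \<le> Q p $ y"
    by (rule lower_rate_op_nonneg_at_zero) (use assms in \<open>auto simp: p_def\<close>)
  moreover have "- (rate_bound Q * (\<Sum>z\<in>UNIV. max (- v $ z) 0)) \<le> Q (- n) $ y"
    using lower_rate_op_lower_bound[of "- n" y] by (simp add: n_def)
  ultimately show ?thesis by simp
qed

lemma lower_rate_op_le_pos_part_outside:
  assumes closed: "Q (ind B) $ y \<le> 0" and "y \<notin> B"
    and le1: "\<And>z. v $ z \<le> 1" and "0 < v $ y"
  shows "Q v $ y \<le> rate_bound Q * (\<Sum>z\<in>-B. max (v $ z) 0)"
proof -
  define h where "h = (\<chi> z. if z \<in> B then 0 else max (v $ z) 0)"
  have "Q v $ y \<le> Q (ind B + h) $ y"
    by (rule lower_rate_op_mono_at) (use le1 assms in \<open>auto simp: h_def max_def\<close>)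
  moreover have "Q (ind B + h) $ y + Q (- h) $ y \<le> Q (ind B) $ y"
    using lower_rate_op_superadditive[of "ind B + h" y "- h"] by simp
  moreover have "- (rate_bound Q * (\<Sum>z\<in>UNIV. \<bar>h $ z\<bar>)) \<le> Q (- h) $ y"
    using lower_rate_op_lower_bound[of "- h" y] by simp
  moreover have "(\<Sum>z\<in>UNIV. \<bar>h $ z\<bar>) = (\<Sum>z\<in>-B. max (v $ z) 0)"
    by (simp add: h_def sum.If_cases Compl_eq)
  ultimately show ?thesis
    using closed by simp
qed

lemma lower_rate_op_lower_bound_by_ind:
  assumes nonneg: "\<And>z. 0 \<le> v $ z" and "0 \<le> \<delta>"
    and "\<And>z. z \<in> C \<Longrightarrow> \<delta> \<le> v $ z" and "y \<notin> C"
  shows "\<delta> * Q (ind C) $ y - rate_bound Q * v $ y \<le> Q v $ y"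
proof -
  have "Q (\<delta> *\<^sub>R ind C + (v $ y) *\<^sub>R ind {y}) $ y \<le> Q v $ y"
    by (rule lower_rate_op_mono_at) (use assms in auto)
  moreover have "Q (\<delta> *\<^sub>R ind C) $ y + Q ((v $ y) *\<^sub>R ind {y}) $ y
      \<le> Q (\<delta> *\<^sub>R ind C + (v $ y) *\<^sub>R ind {y}) $ y"
    by (rule lower_rate_op_superadditive)
  moreover have "- (v $ y * rate_bound Q) \<le> Q ((v $ y) *\<^sub>R ind {y}) $ y"
    using lower_rate_op_scaleR_ind_bound[of "v $ y" y y] nonneg[of y] by (simp add: abs_le_iff)
  ultimately show ?thesis
    using lower_rate_op_scaleR[OF \<open>0 \<le> \<delta>\<close>] by (simp add: mult.commute)
qed

lemma lower_rate_op_plus_bound_nonneg: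
  "(\<And>z. 0 \<le> v $ z) \<Longrightarrow> 0 \<le> Q v $ y + rate_bound Q * v $ y"
  using lower_rate_op_lower_bound_by_ind[of v 0 "{}" y] by simp

lemma lower_rate_op_plus_bound_pos:
  assumes nonneg: "\<And>z. 0 \<le> v $ z" and pos: "\<And>z. z \<in> C \<Longrightarrow> 0 < v $ z"
    and "y \<notin> C" and "0 < Q (ind C) $ y"
  shows "0 < Q v $ y + rate_bound Q * v $ y"
proof -
  define \<delta> where "\<delta> = Min (insert 1 ((\<lambda>z. v $ z) ` C))"
  have "0 < \<delta>"
    unfolding \<delta>_def using pos by (subst Min_gr_iff) auto
  moreover have "\<delta> \<le> v $ z" if "z \<in> C" for z
    unfolding \<delta>_def using that by (intro Min_le) auto
  ultimately have "\<delta> * Q (ind C) $ y - rate_bound Q * v $ y \<le> Q v $ y"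
    by (intro lower_rate_op_lower_bound_by_ind) (use nonneg \<open>y \<notin> C\<close> in auto)
  moreover have "0 < \<delta> * Q (ind C) $ y"
    using \<open>0 < \<delta>\<close> \<open>0 < Q (ind C) $ y\<close> by simp
  ultimately show ?thesis by linarith
qed

end

section \<open>Lower reachability\<close>

lemma reach_seq_mono: "m \<le> n \<Longrightarrow> reach_seq Q A m \<subseteq> reach_seq Q A n"
  by (induction n rule: dec_induct) auto

lemma reach_seq_stabilizes: "\<exists>n. reach_seq Q A n = reach_seq Q A (Suc n)"
proof (rule ccontr)
  assume growing: "\<nexists>n. reach_seq Q A n = reach_seq Q A (Suc n)"
  have "n \<le> card (reach_seq Q A n)" for n
  proof (induction n)
    case (Suc n)
    have "reach_seq Q A n \<subset> reach_seq Q A (Suc n)"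
      using growing by auto
    then have "card (reach_seq Q A n) < card (reach_seq Q A (Suc n))"
      by (rule psubset_card_mono[OF finite])
    with Suc.IH show ?case
      by linarith
  qed simp
  moreover have "card (reach_seq Q A (Suc CARD('a))) \<le> CARD('a)"
    by (rule card_mono) auto
  ultimately show False
    by (metis not_less_eq_eq)
qed

lemma not_lower_reachable_imp_closed_superset:
  assumes "\<not> lower_reachable Q x A"
  obtains B where "A \<subseteq> B" "x \<notin> B" "\<And>y. y \<notin> B \<Longrightarrow> Q (ind B) $ y \<le> 0"
proof
  define N where "N = (LEAST n. reach_seq Q A n = reach_seq Q A (Suc n))"
  have stable: "reach_seq Q A N = reach_seq Q A (Suc N)"
    unfolding N_def by (rule LeastI_ex[OF reach_seq_stabilizes])
  show "Q (ind (reach_seq Q A N)) $ y \<le> 0" if y: "y \<notin> reach_seq Q A N" for y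
  proof (rule ccontr)
    assume "\<not> Q (ind (reach_seq Q A N)) $ y \<le> 0"
    with y have "y \<in> reach_seq Q A (Suc N)"
      by simp
    with y stable show False
      by blast
  qed
  show "A \<subseteq> reach_seq Q A N"
    using reach_seq_mono[of 0 N Q A] by simp
  show "x \<notin> reach_seq Q A N"
    using assms by (simp add: lower_reachable_def N_def)
qed

section \<open>The lower transition semigroup\<close>

context
  fixes Q :: "real^'x::finite \<Rightarrow> real^'x"
    and T :: "real \<Rightarrow> real^'x \<Rightarrow> real^'x"
  assumes Q: "lower_rate_op Q"
    and T: "is_lower_semigroup Q T"
begin

lemma lower_semigroup_zero: "T 0 f = f"
  using T by (simp add: is_lower_semigroup_def)

lemma lower_semigroup_nth_has_derivative:
  assumes "0 \<le> a" and "s \<in> {a..b}"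
  shows "((\<lambda>s. T s f $ y) has_real_derivative Q (T s f) $ y) (at s within {a..b})"
proof -
  have "((\<lambda>s. T s f) has_vector_derivative Q (T s f)) (at s within {0..})"
    using T assms unfolding is_lower_semigroup_def by auto
  from bounded_linear.has_vector_derivative[OF bounded_linear_vec_nth this, of y]
  have "((\<lambda>s. T s f $ y) has_real_derivative Q (T s f) $ y) (at s within {0..})"
    by (simp add: has_real_derivative_iff_has_vector_derivative)
  then show ?thesis
    by (rule has_field_derivative_subset) (use assms in auto)
qed

lemma lower_semigroup_nonneg:
  assumes "\<And>z. 0 \<le> f $ z" and "0 \<le> s"
  shows "0 \<le> T s f $ y"
proof -
  have "- T s f $ y \<le> 0"
  proof (rule nonpos_preserved_by_derivative_bound[where u="\<lambda>i r. - T r f $ i"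
        and d="\<lambda>i r. - Q (T r f) $ i" and S=UNIV and K="rate_bound Q" and a=0])
    show "- Q (T r f) $ i \<le> rate_bound Q * (\<Sum>j\<in>UNIV. max (- T r f $ j) 0)"
      if "0 < - T r f $ i" for i r
      using lower_rate_op_ge_neg_part[OF Q, of "T r f" i] that by simp
  qed (use assms rate_bound_nonneg
      in \<open>auto intro!: DERIV_minus lower_semigroup_nth_has_derivative simp: lower_semigroup_zero\<close>)
  then show ?thesis by simp
qed

lemma lower_semigroup_le_const:
  assumes "\<And>z. f $ z \<le> c" and "0 \<le> s"
  shows "T s f $ y \<le> c"
proof -
  have "T s f $ y - c \<le> 0"
    by (rule nonpos_preserved_by_derivative_bound[where u="\<lambda>i r. T r f $ i - c"
          and d="\<lambda>i r. Q (T r f) $ i" and S=UNIV and K="rate_bound Q" and a=0])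
      (use assms rate_bound_nonneg lower_rate_op_le_pos_part[OF Q]
        in \<open>auto intro!: derivative_eq_intros lower_semigroup_nth_has_derivative simp: lower_semigroup_zero\<close>)
  then show ?thesis by simp
qed

lemma lower_semigroup_nonpos_outside_closed:
  assumes closed: "\<And>y. y \<notin> B \<Longrightarrow> Q (ind B) $ y \<le> 0"
    and le1: "\<And>z. f $ z \<le> 1" and "\<And>z. z \<notin> B \<Longrightarrow> f $ z \<le> 0"
    and "y \<notin> B" and "0 \<le> s"
  shows "T s f $ y \<le> 0"
proof (rule nonpos_preserved_by_derivative_bound[where u="\<lambda>i r. T r f $ i"
      and d="\<lambda>i r. Q (T r f) $ i" and S="-B" and K="rate_bound Q" and a=0])
  show "Q (T r f) $ z \<le> rate_bound Q * (\<Sum>j\<in>-B. max (T r f $ j) 0)"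
    if "z \<in> -B" "r \<in> {0..s}" "0 < T r f $ z" for z r
    using that closed le1 lower_semigroup_le_const
    by (intro lower_rate_op_le_pos_part_outside[OF Q]) auto
qed (use assms rate_bound_nonneg
      in \<open>auto intro: lower_semigroup_nth_has_derivative simp: lower_semigroup_zero\<close>)

text \<open>The weight \<open>exp (K r)\<close> absorbs the possibly negative diagonal rate \<open>Q I\<^sub>y (y) \<ge> -K\<close>.\<close>

lemma lower_semigroup_exp_weighted_has_derivative:
  assumes "0 \<le> a" and "r \<in> {a..b}"
  shows "((\<lambda>r. exp (rate_bound Q * r) * T r f $ y) has_real_derivative
      exp (rate_bound Q * r) * (Q (T r f) $ y + rate_bound Q * T r f $ y)) (at r within {a..b})"
  by (rule derivative_eq_intros lower_semigroup_nth_has_derivative[OF assms] refl | simp)+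
    (simp add: algebra_simps)

lemma lower_semigroup_exp_weighted_mono:
  assumes nonneg: "\<And>z. 0 \<le> f $ z" and "0 \<le> a" and "a \<le> b"
  shows "exp (rate_bound Q * a) * T a f $ y \<le> exp (rate_bound Q * b) * T b f $ y"
proof (rule nondecreasing_if_derivative_nonneg[OF \<open>a \<le> b\<close>,
      where f'="\<lambda>r. exp (rate_bound Q * r) * (Q (T r f) $ y + rate_bound Q * T r f $ y)"])
  show "((\<lambda>r. exp (rate_bound Q * r) * T r f $ y) has_real_derivative
      exp (rate_bound Q * r) * (Q (T r f) $ y + rate_bound Q * T r f $ y)) (at r within {a..b})"
    if "r \<in> {a..b}" for r
    using \<open>0 \<le> a\<close> that by (rule lower_semigroup_exp_weighted_has_derivative)
  show "0 \<le> exp (rate_bound Q * r) * (Q (T r f) $ y + rate_bound Q * T r f $ y)"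
    if "a < r" for r
  proof -
    have "0 \<le> Q (T r f) $ y + rate_bound Q * T r f $ y"
      by (rule lower_rate_op_plus_bound_nonneg[OF Q])
        (use \<open>0 \<le> a\<close> that lower_semigroup_nonneg[OF nonneg] in auto)
    then show ?thesis by simp
  qed
qed

lemma lower_semigroup_pos_if_pos:
  assumes nonneg: "\<And>z. 0 \<le> f $ z" and "0 < f $ y" and "0 \<le> s"
  shows "0 < T s f $ y"
proof -
  have "exp (rate_bound Q * 0) * T 0 f $ y \<le> exp (rate_bound Q * s) * T s f $ y"
    by (rule lower_semigroup_exp_weighted_mono) (use nonneg \<open>0 \<le> s\<close> in auto)
  then have "0 < exp (rate_bound Q * s) * T s f $ y"
    using \<open>0 < f $ y\<close> by (simp add: lower_semigroup_zero)
  then show ?thesis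
    by (simp add: zero_less_mult_iff)
qed

lemma lower_semigroup_pos_if_reaches:
  assumes nonneg: "\<And>z. 0 \<le> f $ z" and "\<And>z r. z \<in> C \<Longrightarrow> 0 < r \<Longrightarrow> 0 < T r f $ z"
    and "y \<notin> C" and "0 < Q (ind C) $ y" and "0 < s"
  shows "0 < T s f $ y"
proof -
  have "exp (rate_bound Q * 0) * T 0 f $ y < exp (rate_bound Q * s) * T s f $ y"
  proof (rule increasing_if_derivative_pos[OF \<open>0 < s\<close>,
        where f'="\<lambda>r. exp (rate_bound Q * r) * (Q (T r f) $ y + rate_bound Q * T r f $ y)"])
    show "((\<lambda>r. exp (rate_bound Q * r) * T r f $ y) has_real_derivative
        exp (rate_bound Q * r) * (Q (T r f) $ y + rate_bound Q * T r f $ y)) (at r within {0..s})"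
      if "r \<in> {0..s}" for r
      using that by (intro lower_semigroup_exp_weighted_has_derivative) auto
    show "0 < exp (rate_bound Q * r) * (Q (T r f) $ y + rate_bound Q * T r f $ y)"
      if "0 < r" for r
    proof -
      have "0 < Q (T r f) $ y + rate_bound Q * T r f $ y"
        by (rule lower_rate_op_plus_bound_pos[OF Q, where C=C])
          (use that assms lower_semigroup_nonneg[OF nonneg] in auto)
      then show ?thesis by simp
    qed
  qed
  then have "0 < exp (rate_bound Q * s) * T s f $ y"
    using nonneg[of y] by (simp add: lower_semigroup_zero)
  then show ?thesis
    by (simp add: zero_less_mult_iff)
qed

lemma lower_semigroup_ind_pos_on_reach_seq:
  assumes "y \<in> reach_seq Q A k" and "0 < s"
  shows "0 < T s (ind A) $ y"
  using assms
proof (induction k arbitrary: y s)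
  case 0
  then show ?case
    by (intro lower_semigroup_pos_if_pos) simp_all
next
  case (Suc k)
  show ?case
  proof (cases "y \<in> reach_seq Q A k")
    case True
    then show ?thesis using Suc by blast
  next
    case False
    then have "0 < Q (ind (reach_seq Q A k)) $ y"
      using Suc.prems(1) by simp
    show ?thesis
    proof (rule lower_semigroup_pos_if_reaches[where C="reach_seq Q A k"])
      show "0 < T r (ind A) $ z" if "z \<in> reach_seq Q A k" "0 < r" for z r
        using Suc.IH that .
    qed (use False \<open>0 < Q (ind (reach_seq Q A k)) $ y\<close> \<open>0 < s\<close> in simp_all)
  qed
qed

end

theorem proposition12:
  fixes Q :: "real^'x::finite \<Rightarrow> real^'x"
    and T :: "real \<Rightarrow> real^'x \<Rightarrow> real^'x"
  assumes "lower_rate_op Q"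
    and "is_lower_semigroup Q T"
    and "t > 0"
  shows "T t (ind A) $ x > 0 \<longleftrightarrow> lower_reachable Q x A"
proof
  assume "T t (ind A) $ x > 0"
  show "lower_reachable Q x A"
  proof (rule ccontr)
    assume "\<not> lower_reachable Q x A"
    then show False
    proof (rule not_lower_reachable_imp_closed_superset)
      fix B
      assume "A \<subseteq> B" "x \<notin> B" and closed: "\<And>y. y \<notin> B \<Longrightarrow> Q (ind B) $ y \<le> 0"
      have "T t (ind A) $ x \<le> 0"
        by (rule lower_semigroup_nonpos_outside_closed[OF assms(1,2) closed])
          (use \<open>A \<subseteq> B\<close> \<open>x \<notin> B\<close> \<open>t > 0\<close> in auto)
      with \<open>T t (ind A) $ x > 0\<close> show False
        by simp
    qed
  qed
next
  assume "lower_reachable Q x A"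
  then show "T t (ind A) $ x > 0"
    unfolding lower_reachable_def
    by (rule lower_semigroup_ind_pos_on_reach_seq[OF assms(1,2) _ assms(3)])
qed

end
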